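(* Let $q$ be a prime power, $h\geq 2$, and let $\mathcal{L}$ be a blocking set of $\mathrm{PG}(2,q^h)$ projectively equivalent to $\{(x:\mathrm{Tr}_{q^h/q}(x):y): x\in\mathbb{F}_{q^h},\ y\in\mathbb{F}_q,\ (x,y)\neq(0,0)\}$. Let $P$ be a point not in $\mathcal{L}$. Then $P$ is incident with at least $q^h-q^{h-2}+1$ tangent lines to $\mathcal{L}$.
   Context: $\mathrm{Tr}_{q^h/q}(x)=x+x^q+\dots+x^{q^{h-1}}$. Points of $\mathrm{PG}(2,q^h)$ are written in homogeneous coordinates. A tangent line to $\mathcal{L}$ is a line meeting $\mathcal{L}$ in exactly one point. *)

theory Defs
  imports "HOL-Analysis.Analysis" "HOL-Computational_Algebra.Primes"
begin

text \<open>Homogeneous coordinates: vectors in F^3 (index type 3, coordinates 1,2,3).\<close>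

definition mk3 :: "'a::zero \<Rightarrow> 'a \<Rightarrow> 'a \<Rightarrow> 'a^3" where
  "mk3 a b c = (\<chi> i. if i = 1 then a else if i = 2 then b else c)"

definition proj_pt :: "'a::field^3 \<Rightarrow> ('a^3) set" where
  "proj_pt v = {c *s v | c. c \<noteq> 0}"

definition PG2 :: "('a::field^3) set set" where
  "PG2 = {proj_pt v | v. v \<noteq> 0}"

definition dot3 :: "'a::field^3 \<Rightarrow> 'a^3 \<Rightarrow> 'a" where
  "dot3 l v = (\<Sum>i\<in>UNIV. l $ i * v $ i)"

definition proj_line :: "'a::field^3 \<Rightarrow> ('a^3) set set" where
  "proj_line l = {P \<in> PG2. \<exists>v\<in>P. dot3 l v = 0}"

definition lines2 :: "('a::field^3) set set set" where
  "lines2 = {proj_line l | l. l \<noteq> 0}"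

definition blocking_set :: "('a::field^3) set set \<Rightarrow> bool" where
  "blocking_set B \<longleftrightarrow> B \<subseteq> PG2 \<and> (\<forall>lne\<in>lines2. lne \<inter> B \<noteq> {})"

definition tangent_line :: "('a::field^3) set set \<Rightarrow> ('a^3) set set \<Rightarrow> bool" where
  "tangent_line B lne \<longleftrightarrow> lne \<in> lines2 \<and> card (lne \<inter> B) = 1"

definition proj_image :: "'a::field^3^3 \<Rightarrow> ('a^3) set set \<Rightarrow> ('a^3) set set" where
  "proj_image M B = (\<lambda>P. (\<lambda>v. M *v v) ` P) ` B"

definition proj_equiv :: "('a::field^3) set set \<Rightarrow> ('a^3) set set \<Rightarrow> bool" where
  "proj_equiv A B \<longleftrightarrow> (\<exists>M. invertible M \<and> B = proj_image M A)"

definition trace_rel :: "nat \<Rightarrow> nat \<Rightarrow> 'a::field \<Rightarrow> 'a" where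
  "trace_rel q h x = (\<Sum>i<h. x ^ (q ^ i))"

text \<open>The set {(x : Tr(x) : y) | x in F_{q^h}, y in F_q, (x,y) != (0,0)};
  F_q is the subfield {y. y^q = y}.\<close>
definition trace_set :: "nat \<Rightarrow> nat \<Rightarrow> ('a::field^3) set set" where
  "trace_set q h = {proj_pt (mk3 x (trace_rel q h x) y) | x y. y ^ q = y \<and> (x, y) \<noteq> (0, 0)}"

definition prime_power :: "nat \<Rightarrow> bool" where
  "prime_power q \<longleftrightarrow> (\<exists>p k. prime p \<and> k > 0 \<and> q = p ^ k)"

end

theory Submission
  imports Defs "HOL-Library.Cardinality" "HOL-Number_Theory.Residues" "HOL-Decision_Procs.Algebra_Aux"
begin

text \<open>Up to a collineation, \<open>L\<close> is the set of points \<open>\<langle>w\<rangle>\<close>, \<open>w \<noteq> 0\<close>, of the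
  \<open>\<bbbF>\<^sub>q\<close>-subspace \<open>W = {(x, Tr x, y)}\<close>, and has at most \<open>q\<^sup>h + q\<^sup>h\<^sup>-\<^sup>1 + 1\<close> points.
  If a line contains two points \<open>\<langle>w\<^sub>1\<rangle>, \<langle>w\<^sub>2\<rangle>\<close> of \<open>L\<close>, it also contains the \<open>q\<close>
  points \<open>\<langle>w\<^sub>1 + a w\<^sub>2\<rangle>\<close>, \<open>a \<in> \<bbbF>\<^sub>q\<close>, of \<open>L\<close>; so every line is tangent or meets \<open>L\<close> in at
  least \<open>q + 1\<close> points. The \<open>q\<^sup>h + 1\<close> lines through \<open>P \<notin> L\<close> meet pairwise only in \<open>P\<close>
  and each meets the blocking set \<open>L\<close>, so if \<open>t\<close> of them are tangent,
  \<open>t + (q + 1)(q\<^sup>h + 1 - t) \<le> q\<^sup>h + q\<^sup>h\<^sup>-\<^sup>1 + 1\<close>, i.e. \<open>q\<^sup>h + 1 - t \<le> q\<^sup>h\<^sup>-\<^sup>2\<close>.\<close>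

section \<open>Finite fields and the relative trace\<close>

lemma Units_cring_class_ops_field: "Units (cring_class_ops :: 'a::field ring) = - {0}"
proof -
  have "Units (cring_class_ops :: 'a ring) = {y. \<exists>x. x * y = 1 \<and> y * x = 1}"
    by (simp add: Units_def cring_class_ops_def)
  also have "\<dots> = - {0}"
    by (auto simp: Compl_eq_Diff_UNIV) (metis field_class.field_inverse mult.commute)
  finally show ?thesis .
qed

text \<open>The library has this as \<open>finite_field_power_card_eq_same\<close> only for the sort
  \<^class>\<open>finite_field\<close>; here it follows from Lagrange's theorem in the unit group.\<close>

lemma finite_field_power_card:
  fixes x :: "'a::{field,finite}"
  shows "x ^ CARD('a) = x"
proof (cases "x = 0")
  case False
  have "x ^ card (Units (cring_class_ops :: 'a ring)) = 1"
    using False by (intro cring_class.units_power_order_eq_one) (simp_all add: Units_cring_class_ops_field)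
  moreover have "card (Units (cring_class_ops :: 'a ring)) = CARD('a) - 1"
    by (simp add: Units_cring_class_ops_field Compl_eq_Diff_UNIV card_Diff_singleton)
  ultimately have "x ^ Suc (CARD('a) - 1) = x"
    by (simp only: power_Suc2) simp
  then show ?thesis
    by (simp add: finite_UNIV_card_ge_0)
qed (simp add: power_0_left)

lemma prime_CHAR_finite_field: "prime CHAR('a::{field,finite})"
  by (rule prime_CHAR_semidom) (simp add: finite_imp_CHAR_pos)

lemma prime_power_ge_2:
  assumes "prime_power q"
  shows "2 \<le> q"
proof -
  obtain p k where "prime p" "k > 0" "q = p ^ k"
    using assms unfolding prime_power_def by blast
  then show ?thesis
    using prime_ge_2_nat[of p] self_le_power[of p k] by simp
qed

lemma prime_power_card_eq_CHAR_power:
  assumes "prime_power q" "CARD('a::{field,finite}) = q ^ h"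
  obtains k where "q = CHAR('a) ^ k"
proof -
  obtain p k where p: "prime p" "q = p ^ k"
    using assms(1) unfolding prime_power_def by blast
  have "CHAR('a) dvd p ^ (k * h)"
    using CHAR_dvd_CARD[where 'a='a] assms(2) p(2) by (simp add: power_mult)
  then have "CHAR('a) = p"
    using prime_CHAR_finite_field p(1) prime_dvd_power primes_dvd_imp_eq by blast
  then show thesis
    using that p(2) by blast
qed

lemma power_power_fixed:
  fixes c :: "'a::monoid_mult"
  assumes "c ^ q = c"
  shows "c ^ (q ^ i) = c"
  by (induction i) (simp_all add: power_mult assms)

lemma trace_rel_zero: "0 < q \<Longrightarrow> trace_rel q h (0::'a::field) = 0"
  unfolding trace_rel_def by (simp add: power_0_left)

lemma trace_rel_add:
  fixes x y :: "'a::field"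
  assumes "prime CHAR('a)" "q = CHAR('a) ^ k"
  shows "trace_rel q h (x + y) = trace_rel q h x + trace_rel q h y"
  unfolding trace_rel_def
  by (simp add: sum.distrib freshmans_dream' assms flip: power_mult)

lemma trace_rel_scale:
  fixes x c :: "'a::field"
  assumes "c ^ q = c"
  shows "trace_rel q h (c * x) = c * trace_rel q h x"
  unfolding trace_rel_def
  by (simp add: power_mult_distrib sum_distrib_left power_power_fixed[OF assms])

lemma trace_rel_power_fixed:
  fixes x :: "'a::field"
  assumes "prime CHAR('a)" "q = CHAR('a) ^ k" "x ^ (q ^ h) = x"
  shows "trace_rel q h x ^ q = trace_rel q h x"
proof -
  have "trace_rel q h x ^ q = (\<Sum>i<h. x ^ (q ^ Suc i))"
    unfolding trace_rel_def
    by (simp add: freshmans_dream_sum' assms(1,2) flip: power_mult) (simp add: mult.commute)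
  also have "\<dots> = trace_rel q h x"
    using sum.lessThan_Suc_shift[of "\<lambda>i. x ^ (q ^ i)" h] assms(3)
    by (simp add: trace_rel_def add.commute)
  finally show ?thesis .
qed

lemma card_trace_rel_fibre_le:
  assumes "2 \<le> q" "1 \<le> h"
  shows "card {z::'a::field. trace_rel q h z = c} \<le> q ^ (h - 1)"
proof -
  define T :: "'a poly" where "T = (\<Sum>i<h. Polynomial.monom 1 (q ^ i)) - Polynomial.monom c 0"
  have "Polynomial.coeff T (q ^ (h - 1)) = (\<Sum>i<h. if q ^ i = q ^ (h - 1) then 1 else 0)"
    unfolding T_def using assms by (simp add: Polynomial.coeff_sum coeff_monom)
  also have "\<dots> = (\<Sum>i<h. if i = h - 1 then 1 else 0)"
    using assms by (simp add: power_inject_exp)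
  also have "\<dots> = 1"
    using assms by simp
  finally have "T \<noteq> 0"
    by auto
  have "degree T \<le> q ^ (h - 1)"
    unfolding T_def using assms
    by (intro degree_diff_le degree_sum_le)
      (auto intro: order_trans[OF degree_monom_le] power_increasing)
  moreover have "{z. trace_rel q h z = c} = {z. poly T z = 0}"
    unfolding T_def trace_rel_def by (simp add: poly_sum poly_monom)
  ultimately show ?thesis
    using card_poly_roots_bound[OF \<open>T \<noteq> 0\<close>] by simp
qed

text \<open>The trace maps into \<open>\<bbbF>\<^sub>q\<close> and its fibres have at most \<open>q\<^sup>h\<^sup>-\<^sup>1\<close> elements,
  so its image has at least \<open>q\<close> elements.\<close>

lemma card_power_fixed_ge:
  assumes "CARD('a::{field,finite}) = q ^ h" "q = CHAR('a) ^ k" "2 \<le> q" "1 \<le> h"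
  shows "q \<le> card {a::'a. a ^ q = a}"
proof -
  let ?R = "range (trace_rel q h :: 'a \<Rightarrow> 'a)"
  have "q * q ^ (h - 1) = card (UNIV :: 'a set)"
    using assms(1,4) by (simp flip: power_Suc)
  also have "\<dots> \<le> (\<Sum>c\<in>?R. card {z::'a. trace_rel q h z = c})"
    by (rule order_trans[OF card_mono card_UN_le]) auto
  also have "\<dots> \<le> card ?R * q ^ (h - 1)"
    using sum_bounded_above[of ?R "\<lambda>c. card {z::'a. trace_rel q h z = c}" "q ^ (h - 1)"]
      card_trace_rel_fibre_le[OF assms(3,4)] by (metis of_nat_id)
  finally have "q \<le> card ?R"
    using assms(3) by simp
  also have "card ?R \<le> card {a::'a. a ^ q = a}"
    using assms(1,2) finite_field_power_card[where 'a='a]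
    by (intro card_mono) (auto intro: trace_rel_power_fixed prime_CHAR_finite_field)
  finally show ?thesis .
qed

section \<open>Points and lines of the projective plane\<close>

lemma mk3_nth [simp]: "mk3 a b c $ 1 = a" "mk3 a b c $ 2 = b" "mk3 a b c $ 3 = c"
  unfolding mk3_def by simp_all

lemma vec3_eq_iff: "v = w \<longleftrightarrow> v $ 1 = w $ 1 \<and> v $ 2 = w $ 2 \<and> v $ 3 = w $ 3"
  for v w :: "'a^3"
  by (simp add: vec_eq_iff forall_3)

lemma dot3_expand: "dot3 l v = l $ 1 * v $ 1 + l $ 2 * v $ 2 + l $ 3 * v $ 3"
  unfolding dot3_def by (simp add: sum_3)

lemma dot3_scale: "dot3 l (c *s v) = c * dot3 l v"
  and dot3_add: "dot3 l (v + w) = dot3 l v + dot3 l w"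
  and dot3_add_left: "dot3 (l + m) v = dot3 l v + dot3 m v"
  and dot3_scale_left: "dot3 (c *s l) v = c * dot3 l v"
  unfolding dot3_expand by (simp_all add: algebra_simps)

lemma proj_pt_self: "v \<in> proj_pt v"
  unfolding proj_pt_def by (auto intro: exI[of _ 1])

lemma proj_pt_scale:
  assumes "c \<noteq> 0"
  shows "proj_pt (c *s v) = proj_pt v"
proof -
  have "{d *s (c *s v) | d. d \<noteq> 0} = {d *s v | d. d \<noteq> 0}"
  proof (intro equalityI subsetI)
    fix x assume "x \<in> {d *s v | d. d \<noteq> 0}"
    then obtain d where "d \<noteq> 0" "x = d *s v" by blast
    then show "x \<in> {d *s (c *s v) | d. d \<noteq> 0}"
      using assms by (intro CollectI exI[of _ "d / c"]) (simp add: vector_smult_assoc)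
  qed (auto simp: vector_smult_assoc assms)
  then show ?thesis
    unfolding proj_pt_def .
qed

lemma proj_pt_eq_iff: "proj_pt v = proj_pt w \<longleftrightarrow> (\<exists>c. c \<noteq> 0 \<and> v = c *s w)"
proof
  assume "proj_pt v = proj_pt w"
  then have "v \<in> proj_pt w" using proj_pt_self by metis
  then show "\<exists>c. c \<noteq> 0 \<and> v = c *s w" unfolding proj_pt_def by blast
qed (auto simp: proj_pt_scale)

lemma PG2_proj_pt: "proj_pt w \<in> PG2 \<longleftrightarrow> w \<noteq> 0"
proof
  assume "proj_pt w \<in> PG2"
  then obtain v where "v \<noteq> 0" "proj_pt w = proj_pt v" unfolding PG2_def by blast
  then show "w \<noteq> 0" by (auto simp: proj_pt_eq_iff)
qed (auto simp: PG2_def)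

lemma proj_pt_in_proj_line_iff:
  assumes "w \<noteq> 0"
  shows "proj_pt w \<in> proj_line l \<longleftrightarrow> dot3 l w = 0"
proof
  assume "proj_pt w \<in> proj_line l"
  then obtain v where "v \<in> proj_pt w" "dot3 l v = 0" unfolding proj_line_def by blast
  then show "dot3 l w = 0" by (auto simp: proj_pt_def dot3_scale)
qed (use assms proj_pt_self in \<open>auto simp: proj_line_def PG2_proj_pt\<close>)

lemma image_proj_pt: "(\<lambda>v. M *v v) ` proj_pt u = proj_pt (M *v u)"
  by (force simp: proj_pt_def vector_scalar_commute)

lemma proj_pts_independent:
  assumes "proj_pt v \<noteq> proj_pt w" "v \<noteq> 0" "w \<noteq> 0" "a *s v + b *s w = 0"
  shows "a = 0" "b = 0"
proof -
  show "a = 0"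
  proof (rule ccontr)
    assume "a \<noteq> 0"
    then have "v = (- b / a) *s w"
      using assms(4) by (simp add: vec_eq_iff field_simps add_eq_0_iff2)
    moreover have "- b / a \<noteq> 0"
      using \<open>v \<noteq> 0\<close> calculation by auto
    ultimately show False
      using assms(1) proj_pt_scale by metis
  qed
  then show "b = 0"
    using assms(3,4) by (simp add: vector_mul_eq_0)
qed

section \<open>Linear point sets\<close>

definition proj_points :: "('a::field^3) set \<Rightarrow> ('a^3) set set" where
  "proj_points W = proj_pt ` (W - {0})"

definition comb_closed :: "'a set \<Rightarrow> ('a::field^3) set \<Rightarrow> bool" where
  "comb_closed F W \<longleftrightarrow> (\<forall>w1\<in>W. \<forall>w2\<in>W. \<forall>a\<in>F. w1 + a *s w2 \<in> W)"

lemma card_ge_2_obtains_distinct: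
  assumes "finite A" "2 \<le> card A"
  obtains x y where "x \<in> A" "y \<in> A" "x \<noteq> y"
  using assms card_le_Suc0_iff_eq[OF assms(1)] by (metis not_less_eq_eq numeral_2_eq_2)

lemma card_secant_proj_points_ge:
  fixes W :: "('a::{field,finite}^3) set"
  assumes "comb_closed F W" "lne \<in> lines2" "2 \<le> card (lne \<inter> proj_points W)"
  shows "card F + 1 \<le> card (lne \<inter> proj_points W)"
proof -
  obtain l where l: "lne = proj_line l"
    using assms(2) unfolding lines2_def by blast
  obtain Q1 Q2 where Q: "Q1 \<in> lne \<inter> proj_points W" "Q2 \<in> lne \<inter> proj_points W" "Q1 \<noteq> Q2"
    using card_ge_2_obtains_distinct[OF finite assms(3)] by blast
  then obtain w1 w2 where w: "w1 \<in> W" "w2 \<in> W" "w1 \<noteq> 0" "w2 \<noteq> 0"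
    "Q1 = proj_pt w1" "Q2 = proj_pt w2"
    unfolding proj_points_def by blast
  have on_l: "dot3 l w1 = 0" "dot3 l w2 = 0"
    using Q w l by (simp_all add: proj_pt_in_proj_line_iff)
  have indep: "a = 0" "b = 0" if "a *s w1 + b *s w2 = 0" for a b
    using proj_pts_independent[OF _ w(3,4) that] Q(3) w(5,6) by simp_all
  define f where "f a = proj_pt (w1 + a *s w2)" for a
  have nonzero: "w1 + a *s w2 \<noteq> 0" for a
    using indep(1)[of 1 a] by auto
  have "f ` F \<subseteq> lne \<inter> proj_points W"
    using assms(1) w on_l nonzero
    by (auto simp: f_def l proj_points_def comb_closed_def proj_pt_in_proj_line_iff dot3_add dot3_scale)
  moreover have "Q2 \<notin> f ` F"
  proof
    assume "Q2 \<in> f ` F"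
    then obtain a where "proj_pt (w1 + a *s w2) = proj_pt w2"
      by (auto simp: f_def w(6))
    then obtain c where "w1 + a *s w2 = c *s w2"
      by (auto simp: proj_pt_eq_iff)
    then have "1 *s w1 + (a - c) *s w2 = 0"
      by (simp add: algebra_simps)
    then have "(1::'a) = 0"
      by (rule indep(1))
    then show False
      by simp
  qed
  moreover have "inj_on f F"
  proof
    fix a b assume "f a = f b"
    then obtain c where "w1 + a *s w2 = c *s (w1 + b *s w2)"
      by (auto simp: f_def proj_pt_eq_iff)
    then have "(1 - c) *s w1 + (a - c * b) *s w2 = 0"
      by (simp add: algebra_simps vector_smult_assoc)
    then have "1 - c = 0" "a - c * b = 0"
      by (fact indep(1), fact indep(2))
    then show "a = b"
      by simp
  qed
  ultimately have "card (insert Q2 (f ` F)) = card F + 1"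
    by (simp add: card_image)
  moreover have "insert Q2 (f ` F) \<subseteq> lne \<inter> proj_points W"
    using Q(2) \<open>f ` F \<subseteq> _\<close> by blast
  ultimately show ?thesis
    by (metis card_mono finite)
qed

lemma comb_closed_image_matrix:
  assumes "comb_closed F W"
  shows "comb_closed F ((\<lambda>u. M *v u) ` W)"
  unfolding comb_closed_def
proof (intro ballI)
  fix v1 v2 a assume "v1 \<in> (\<lambda>u. M *v u) ` W" "v2 \<in> (\<lambda>u. M *v u) ` W" "a \<in> F"
  then obtain w1 w2 where "w1 \<in> W" "w2 \<in> W" "v1 = M *v w1" "v2 = M *v w2"
    by blast
  moreover from this have "v1 + a *s v2 = M *v (w1 + a *s w2)"
    by (simp add: matrix_vector_right_distrib vector_scalar_commute)
  ultimately show "v1 + a *s v2 \<in> (\<lambda>u. M *v u) ` W"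
    using assms \<open>a \<in> F\<close> unfolding comb_closed_def by blast
qed

lemma proj_image_proj_points:
  assumes "invertible M"
  shows "proj_image M (proj_points W) = proj_points ((\<lambda>u. M *v u) ` W)"
proof -
  have "inj (\<lambda>u. M *v u)"
    by (rule inj_matrix_vector_mult[OF assms])
  then have "(\<lambda>u. M *v u) ` W - {0} = (\<lambda>u. M *v u) ` (W - {0})"
    by (simp add: image_set_diff)
  then show ?thesis
    unfolding proj_image_def proj_points_def by (simp add: image_image image_proj_pt)
qed

definition trace_space :: "nat \<Rightarrow> nat \<Rightarrow> ('a::field^3) set" where
  "trace_space q h = {mk3 x (trace_rel q h x) y | x y. y ^ q = y}"

lemma trace_set_eq_proj_points:
  assumes "0 < q"
  shows "trace_set q h = proj_points (trace_space q h :: ('a::field^3) set)"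
proof -
  have "mk3 x (trace_rel q h x) y = 0 \<longleftrightarrow> (x, y) = (0, 0)" for x y :: 'a
    using trace_rel_zero[OF assms] by (auto simp: vec3_eq_iff)
  then show ?thesis
    unfolding trace_set_def proj_points_def trace_space_def by blast
qed

lemma comb_closed_trace_space:
  assumes "prime CHAR('a::field)" "q = CHAR('a) ^ k"
  shows "comb_closed {a::'a. a ^ q = a} (trace_space q h)"
  unfolding comb_closed_def
proof (intro ballI)
  fix w1 w2 :: "'a^3" and a :: 'a
  assume "w1 \<in> trace_space q h" "w2 \<in> trace_space q h" "a \<in> {a. a ^ q = a}"
  then obtain x1 y1 x2 y2 where w: "w1 = mk3 x1 (trace_rel q h x1) y1" "y1 ^ q = y1"
    "w2 = mk3 x2 (trace_rel q h x2) y2" "y2 ^ q = y2" and a: "a ^ q = a"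
    unfolding trace_space_def by blast
  have "w1 + a *s w2 = mk3 (x1 + a * x2) (trace_rel q h (x1 + a * x2)) (y1 + a * y2)"
    using w(1,3) by (simp add: vec3_eq_iff trace_rel_add[OF assms] trace_rel_scale[OF a])
  moreover have "(y1 + a * y2) ^ q = y1 + a * y2"
    using w(2,4) a by (simp add: freshmans_dream' assms power_mult_distrib)
  ultimately show "w1 + a *s w2 \<in> trace_space q h"
    unfolding trace_space_def by blast
qed

lemma proj_pt_trace_scale:
  assumes "c ^ q = c" "c \<noteq> 0"
  shows "proj_pt (mk3 x (trace_rel q h x) y) = proj_pt (mk3 (c * x) (trace_rel q h (c * x)) (c * y))"
proof -
  have "mk3 (c * x) (trace_rel q h (c * x)) (c * y) = c *s mk3 x (trace_rel q h x) y"
    by (simp add: vec3_eq_iff trace_rel_scale[OF assms(1)])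
  then show ?thesis
    by (simp add: proj_pt_scale assms(2))
qed

lemma trace_set_subset:
  assumes "CARD('a::{field,finite}) = q ^ h" "q = CHAR('a) ^ k"
  shows "trace_set q h \<subseteq> range (\<lambda>x. proj_pt (mk3 x (trace_rel q h x) (1::'a)))
    \<union> (\<lambda>x. proj_pt (mk3 x 1 0)) ` {x. trace_rel q h x = 1} \<union> {proj_pt (mk3 1 0 0)}"
proof
  fix Q assume "Q \<in> (trace_set q h :: ('a^3) set set)"
  then obtain x y :: 'a where Q: "Q = proj_pt (mk3 x (trace_rel q h x) y)" and
    y: "y ^ q = y" and xy: "(x, y) \<noteq> (0, 0)"
    unfolding trace_set_def by blast
  consider "y \<noteq> 0" | "y = 0" "trace_rel q h x = 0" | "y = 0" "trace_rel q h x \<noteq> 0"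
    by blast
  then show "Q \<in> range (\<lambda>x. proj_pt (mk3 x (trace_rel q h x) 1))
    \<union> (\<lambda>x. proj_pt (mk3 x 1 0)) ` {x. trace_rel q h x = 1} \<union> {proj_pt (mk3 1 0 0)}"
  proof cases
    case 1
    then have "Q = proj_pt (mk3 (x / y) (trace_rel q h (x / y)) 1)"
      using proj_pt_trace_scale[of "1 / y" q x h y] y Q by (simp add: power_divide)
    then show ?thesis by blast
  next
    case 2
    then have "mk3 x (trace_rel q h x) y = x *s mk3 1 0 0" "x \<noteq> 0"
      using xy by (simp_all add: vec3_eq_iff)
    then have "Q = proj_pt (mk3 1 0 0)"
      using Q proj_pt_scale by metis
    then show ?thesis
      by blast
  next
    case 3
    define t where "t = trace_rel q h x"
    have "t ^ q = t"
      unfolding t_def using assms finite_field_power_card[of x]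
      by (intro trace_rel_power_fixed prime_CHAR_finite_field) auto
    then have "Q = proj_pt (mk3 (x / t) (trace_rel q h (x / t)) 0)"
      using proj_pt_trace_scale[of "1 / t" q x h y] 3 Q t_def by (simp add: power_divide)
    moreover have "trace_rel q h (x / t) = 1"
      using trace_rel_scale[of "1 / t" q h x] \<open>t ^ q = t\<close> 3 t_def by (simp add: power_divide)
    ultimately show ?thesis by auto
  qed
qed

lemma card_trace_set_le:
  assumes "CARD('a::{field,finite}) = q ^ h" "q = CHAR('a) ^ k" "2 \<le> q" "1 \<le> h"
  shows "card (trace_set q h :: ('a^3) set set) \<le> q ^ h + q ^ (h - 1) + 1"
proof -
  let ?A = "range (\<lambda>x. proj_pt (mk3 x (trace_rel q h x) (1::'a)))"
  let ?B = "(\<lambda>x. proj_pt (mk3 x 1 0)) ` {x::'a. trace_rel q h x = 1}"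
  have "card (trace_set q h :: ('a^3) set set) \<le> card (?A \<union> ?B \<union> {proj_pt (mk3 1 0 0)})"
    by (rule card_mono[OF finite trace_set_subset[OF assms(1,2)]])
  also have "\<dots> \<le> card ?A + card ?B + 1"
    using card_Un_le[of "?A \<union> ?B" "{proj_pt (mk3 1 0 0)}"] card_Un_le[of ?A ?B] by simp
  also have "\<dots> \<le> CARD('a) + card {x::'a. trace_rel q h x = 1} + 1"
    by (intro add_mono card_image_le) auto
  finally show ?thesis
    using card_trace_rel_fibre_le[OF assms(3,4), of "1::'a"] assms(1) by linarith
qed

lemma card_secant_trace_set_image_ge:
  fixes M :: "'a::{field,finite}^3^3"
  assumes "CARD('a) = q ^ h" "q = CHAR('a) ^ k" "2 \<le> q" "1 \<le> h" "invertible M"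
    and "lne \<in> lines2" "2 \<le> card (lne \<inter> proj_image M (trace_set q h))"
  shows "q + 1 \<le> card (lne \<inter> proj_image M (trace_set q h))"
proof -
  have L: "proj_image M (trace_set q h) = proj_points ((\<lambda>u. M *v u) ` trace_space q h)"
    using assms(3,5) by (simp add: trace_set_eq_proj_points proj_image_proj_points)
  have "comb_closed {a::'a. a ^ q = a} ((\<lambda>u. M *v u) ` trace_space q h)"
    by (intro comb_closed_image_matrix comb_closed_trace_space[OF prime_CHAR_finite_field assms(2)])
  then have "card {a::'a. a ^ q = a} + 1 \<le> card (lne \<inter> proj_image M (trace_set q h))"
    using assms(7) unfolding L by (rule card_secant_proj_points_ge[OF _ assms(6)])
  then show ?thesis
    using card_power_fixed_ge[OF assms(1-4)] by simp
qed

section \<open>Tangents through a point off a blocking set\<close>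

lemma dual_pair_of_point:
  fixes p :: "'a::field^3"
  assumes "p \<noteq> 0"
  obtains l1 l2 where "dot3 l1 p = 0" "dot3 l2 p = 0" "l2 \<noteq> 0" "\<And>s. l1 + s *s l2 \<noteq> 0"
    "\<And>v. dot3 l1 v = 0 \<Longrightarrow> dot3 l2 v = 0 \<Longrightarrow> \<exists>c. v = c *s p"
proof -
  consider "p $ 3 \<noteq> 0" | "p $ 3 = 0" "p $ 2 \<noteq> 0" | "p $ 3 = 0" "p $ 2 = 0" "p $ 1 \<noteq> 0"
    using assms by (auto simp: vec3_eq_iff)
  then show thesis
  proof cases
    case 1
    show thesis
    proof (rule that[of "mk3 0 (p$3) (- p$2)" "mk3 (p$3) 0 (- p$1)"])
      fix v :: "'a^3"
      assume "dot3 (mk3 0 (p$3) (- p$2)) v = 0" "dot3 (mk3 (p$3) 0 (- p$1)) v = 0"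
      then show "\<exists>c. v = c *s p"
        using 1 by (intro exI[of _ "v$3 / p$3"]) (simp add: vec3_eq_iff dot3_expand field_simps)
    qed (use 1 in \<open>simp_all add: vec3_eq_iff dot3_expand algebra_simps\<close>)
  next
    case 2
    show thesis
    proof (rule that[of "mk3 (p$2) (- p$1) 0" "mk3 0 0 1"])
      fix v :: "'a^3"
      assume "dot3 (mk3 (p$2) (- p$1) 0) v = 0" "dot3 (mk3 0 0 1) v = 0"
      then show "\<exists>c. v = c *s p"
        using 2 by (intro exI[of _ "v$2 / p$2"]) (simp add: vec3_eq_iff dot3_expand field_simps)
    qed (use 2 in \<open>simp_all add: vec3_eq_iff dot3_expand algebra_simps\<close>)
  next
    case 3
    show thesis
    proof (rule that[of "mk3 0 1 0" "mk3 0 0 1"])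
      fix v :: "'a^3"
      assume "dot3 (mk3 0 1 0) v = 0" "dot3 (mk3 0 0 1) v = 0"
      then show "\<exists>c. v = c *s p"
        using 3 by (intro exI[of _ "v$1 / p$1"]) (simp add: vec3_eq_iff dot3_expand field_simps)
    qed (use 3 in \<open>simp_all add: vec3_eq_iff dot3_expand\<close>)
  qed
qed

text \<open>The \<open>CARD('a) + 1\<close> lines through a point are indexed by \<^typ>\<open>'a option\<close>, a copy
  of the projective line over \<^typ>\<open>'a\<close>.\<close>

lemma pencil_of_point:
  fixes p :: "'a::field^3"
  assumes "p \<noteq> 0"
  obtains pencil :: "'a option \<Rightarrow> 'a^3" where "\<And>r. pencil r \<noteq> 0" "\<And>r. dot3 (pencil r) p = 0"
    "\<And>r r' v. r \<noteq> r' \<Longrightarrow> dot3 (pencil r) v = 0 \<Longrightarrow> dot3 (pencil r') v = 0 \<Longrightarrow> \<exists>c. v = c *s p"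
proof -
  obtain l1 l2 where l: "dot3 l1 p = 0" "dot3 l2 p = 0" "l2 \<noteq> 0" "\<And>s. l1 + s *s l2 \<noteq> 0"
    "\<And>v. dot3 l1 v = 0 \<Longrightarrow> dot3 l2 v = 0 \<Longrightarrow> \<exists>c. v = c *s p"
    by (rule dual_pair_of_point[OF assms]) (rule that)
  define pencil where "pencil r = (case r of None \<Rightarrow> l2 | Some s \<Rightarrow> l1 + s *s l2)" for r
  have meet: "dot3 l1 v = 0 \<and> dot3 l2 v = 0"
    if r: "r \<noteq> r'" "dot3 (pencil r) v = 0" "dot3 (pencil r') v = 0" for r r' v
  proof (cases r)
    case None
    then obtain s' where "r' = Some s'"
      using r(1) None by (cases r') auto
    then show ?thesis
      using r None by (simp add: pencil_def dot3_add_left dot3_scale_left)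
  next
    case (Some s)
    show ?thesis
    proof (cases r')
      case None
      then show ?thesis
        using r Some by (simp add: pencil_def dot3_add_left dot3_scale_left)
    next
      case (Some s')
      then have "dot3 l1 v + s * dot3 l2 v = 0" "dot3 l1 v + s' * dot3 l2 v = 0" "s \<noteq> s'"
        using r \<open>r = Some s\<close> by (simp_all add: pencil_def dot3_add_left dot3_scale_left)
      then have "s * dot3 l2 v = s' * dot3 l2 v"
        by (metis add_left_cancel)
      with \<open>s \<noteq> s'\<close> \<open>dot3 l1 v + s * dot3 l2 v = 0\<close> show ?thesis
        by simp
    qed
  qed
  show thesis
  proof (rule that)
    show "pencil r \<noteq> 0" for r
      using l(3,4) by (cases r) (simp_all add: pencil_def)
    show "dot3 (pencil r) p = 0" for r
      using l(1,2) by (cases r) (simp_all add: pencil_def dot3_add_left dot3_scale_left)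
    show "\<exists>c. v = c *s p" if "r \<noteq> r'" "dot3 (pencil r) v = 0" "dot3 (pencil r') v = 0" for r r' v
      using meet[OF that] l(5) by blast
  qed
qed

lemma card_disjoint_family_ge:
  fixes A :: "'i::finite \<Rightarrow> 'b set"
  assumes "finite S" "\<And>i. A i \<subseteq> S" "disjoint_family A" "\<And>i. A i \<noteq> {}"
    and "\<And>i. 2 \<le> card (A i) \<Longrightarrow> k + 1 \<le> card (A i)"
  shows "CARD('i) + k * (CARD('i) - card {i. card (A i) = 1}) \<le> card S"
proof -
  let ?T = "{i. card (A i) = 1}"
  have fin: "finite (A i)" for i
    using assms(1,2) finite_subset by blast
  have "card ?T \<le> CARD('i)"
    by (rule card_mono) simp_all
  then have "CARD('i) + k * (CARD('i) - card ?T) = card ?T + (k + 1) * card (UNIV - ?T)"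
    by (simp add: card_Diff_subset)
  also have "\<dots> \<le> (\<Sum>i\<in>?T. card (A i)) + (\<Sum>i\<in>UNIV - ?T. card (A i))"
  proof (intro add_mono)
    have "k + 1 \<le> card (A i)" if "i \<notin> ?T" for i
    proof (rule assms(5))
      have "card (A i) \<noteq> 0"
        using assms(4) fin[of i] by simp
      then show "2 \<le> card (A i)"
        using that by simp
    qed
    then show "(k + 1) * card (UNIV - ?T) \<le> (\<Sum>i\<in>UNIV - ?T. card (A i))"
      using sum_bounded_below[of "UNIV - ?T" "k + 1" "\<lambda>i. card (A i)"] by (simp add: mult.commute)
  qed simp
  also have "\<dots> = (\<Sum>i\<in>UNIV. card (A i))"
    using sum.subset_diff[of ?T UNIV "\<lambda>i. card (A i)"] by simp
  also have "\<dots> = card (\<Union>i. A i)"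
    using assms(3) fin by (simp add: card_UN_disjoint disjoint_family_on_def)
  also have "\<dots> \<le> card S"
    using assms(1,2) by (intro card_mono) auto
  finally show ?thesis .
qed

lemma card_blocking_set_tangents_through_point:
  fixes L :: "('a::{field,finite}^3) set set"
  assumes "blocking_set L" "P \<in> PG2" "P \<notin> L"
    and secant: "\<And>lne. lne \<in> lines2 \<Longrightarrow> 2 \<le> card (lne \<inter> L) \<Longrightarrow> k + 1 \<le> card (lne \<inter> L)"
  shows "CARD('a) + 1 + k * (CARD('a) + 1 - card {lne. tangent_line L lne \<and> P \<in> lne}) \<le> card L"
proof -
  obtain p where p: "p \<noteq> 0" "P = proj_pt p"
    using assms(2) unfolding PG2_def by blast
  obtain pencil :: "'a option \<Rightarrow> 'a^3" where pencil: "\<And>r. pencil r \<noteq> 0" "\<And>r. dot3 (pencil r) p = 0"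
    "\<And>r r' v. r \<noteq> r' \<Longrightarrow> dot3 (pencil r) v = 0 \<Longrightarrow> dot3 (pencil r') v = 0 \<Longrightarrow> \<exists>c. v = c *s p"
    by (rule pencil_of_point[OF p(1)]) (rule that)
  define A where "A r = proj_line (pencil r) \<inter> L" for r
  have line: "proj_line (pencil r) \<in> lines2" for r
    unfolding lines2_def using pencil(1) by blast
  have A_nonempty: "A r \<noteq> {}" for r
    using assms(1) line unfolding blocking_set_def A_def by blast
  have "disjoint_family A"
    unfolding disjoint_family_on_def
  proof (intro ballI impI, rule ccontr)
    fix r r' assume "r \<noteq> r'" "A r \<inter> A r' \<noteq> {}"
    then obtain Q where Q: "Q \<in> A r" "Q \<in> A r'"
      by blast
    moreover obtain w where w: "w \<noteq> 0" "Q = proj_pt w"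
      using Q assms(1) unfolding A_def blocking_set_def PG2_def by blast
    ultimately obtain c where "w = c *s p"
      using pencil(3)[OF \<open>r \<noteq> r'\<close>] by (auto simp: A_def proj_pt_in_proj_line_iff)
    then have "Q = P"
      using w p(2) proj_pt_scale by (metis vector_smult_lzero)
    then show False
      using Q assms(3) unfolding A_def by blast
  qed
  then have count: "CARD('a) + 1 + k * (CARD('a) + 1 - card {r. card (A r) = 1}) \<le> card L"
    using card_disjoint_family_ge[OF finite _ \<open>disjoint_family A\<close> A_nonempty, of L k]
      secant line by (auto simp: A_def card_UNIV_option)
  have "card {r. card (A r) = 1} \<le> card {lne. tangent_line L lne \<and> P \<in> lne}"
  proof -
    have "inj (\<lambda>r. proj_line (pencil r))"
    proof (rule injI, rule ccontr)
      fix r r' assume "proj_line (pencil r) = proj_line (pencil r')" "r \<noteq> r'"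
      then have "A r = A r'" "A r \<inter> A r' = {}"
        using \<open>disjoint_family A\<close> by (auto simp: A_def disjoint_family_on_def)
      then show False
        using A_nonempty by simp
    qed
    then have "card {r. card (A r) = 1} = card ((\<lambda>r. proj_line (pencil r)) ` {r. card (A r) = 1})"
      by (simp add: card_image inj_on_subset)
    also have "\<dots> \<le> card {lne. tangent_line L lne \<and> P \<in> lne}"
      using line pencil(1,2) p
      by (intro card_mono) (auto simp: tangent_line_def A_def proj_pt_in_proj_line_iff)
    finally show ?thesis .
  qed
  then have "k * (CARD('a) + 1 - card {lne. tangent_line L lne \<and> P \<in> lne})
      \<le> k * (CARD('a) + 1 - card {r. card (A r) = 1})"
    by (intro mult_le_mono2 diff_le_mono2)
  with count show ?thesis
    by linarith
qed

theorem lemma2p10: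
  fixes q h :: nat
    and L :: "('a::{field,finite}^3) set set"
    and P :: "('a^3) set"
  assumes "prime_power q"
    and "h \<ge> 2"
    and "CARD('a) = q ^ h"
    and "blocking_set L"
    and "proj_equiv (trace_set q h) L"
    and "P \<in> PG2"
    and "P \<notin> L"
  shows "card {lne. tangent_line L lne \<and> P \<in> lne} \<ge> q ^ h - q ^ (h - 2) + 1"
proof -
  let ?tangents = "{lne. tangent_line L lne \<and> P \<in> lne}"
  have q: "2 \<le> q" and h: "1 \<le> h"
    using prime_power_ge_2[OF assms(1)] assms(2) by simp_all
  obtain k where k: "q = CHAR('a) ^ k"
    using prime_power_card_eq_CHAR_power[OF assms(1,3)] by blast
  obtain M where M: "invertible M" "L = proj_image M (trace_set q h)"
    using assms(5) unfolding proj_equiv_def by blast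
  have secant: "q + 1 \<le> card (lne \<inter> L)" if "lne \<in> lines2" "2 \<le> card (lne \<inter> L)" for lne
    using card_secant_trace_set_image_ge[OF assms(3) k q h M(1) that[unfolded M(2)]]
    unfolding M(2) .
  have "card L \<le> q ^ h + q ^ (h - 1) + 1"
    using card_image_le[OF finite] card_trace_set_le[OF assms(3) k q h]
    unfolding M(2) proj_image_def by (rule le_trans)
  moreover have "q ^ h + 1 + q * (q ^ h + 1 - card ?tangents) \<le> card L"
    using card_blocking_set_tangents_through_point[OF assms(4,6,7) secant] unfolding assms(3) .
  moreover have "q ^ (h - 1) = q * q ^ (h - 2)" "q ^ (h - 2) \<le> q ^ h"
    using assms(2) q by (simp_all add: power_increasing flip: power_Suc)
  ultimately have "q * (q ^ h + 1 - card ?tangents) \<le> q * q ^ (h - 2)"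
    by linarith
  then have "q ^ h + 1 - card ?tangents \<le> q ^ (h - 2)"
    using q by simp
  with \<open>q ^ (h - 2) \<le> q ^ h\<close> show ?thesis
    by linarith
qed

end
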